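(* Let $P$ be a positive program (heads may be arbitrary c-atoms). If a set of atoms $M$ is an answer set of $P$ in the sense that $M$ is a model of $P$ and $M$ is an answer set of the positive basic program $inst(P,M)$, then $M$ is an answer set of $P$ in the sense of Marek and Remmel, i.e., $M$ is a model of $P$ and $M$ equals the least fixpoint of the one-step provability operator of $NSS(P,M)$.
   Context: Fix a countable set $\mathcal{A}$ of atoms. A c-atom is $A=(A_d,A_c)$, $A_d\subseteq\mathcal{A}$, $A_c\subseteq 2^{A_d}$; $(\{p\},\{\{p\}\})$ is the elementary c-atom $p$; $\bot=(\mathcal{A},\emptyset)$. A positive rule has the form $A\leftarrow A_1,\dots,A_k$ with c-atoms; $head(r)=A$, $pos(r)=body(r)=\{A_1,\dots,A_k\}$; a positive program is a set of such rules. $S\models A$ iff $S\cap A_d\in A_c$; $S\models body(r)$ iff $S\models A_i$ for all $i$; model = satisfies every rule (head holds or body fails). Conditional satisfaction: $S\models_M A$ iff $S\models A$ and every $I$ with $S\cap A_d\subseteq I\subseteq M\cap A_d$ lies in $A_c$. For a positive program $Q$ whose heads are elementary or $\bot$: $T_Q(S,M)=\{a\mid \exists r\in Q,\ head(r)=(\{a\},\{\{a\}\}),\ S\models_M B\ \forall B\in pos(r)\}$, $T^0_Q(\emptyset,M)=\emptyset$, $T^{i+1}_Q(\emptyset,M)=T_Q(T^i_Q(\emptyset,M),M)$, $T^\infty_Q(\emptyset,M)=\bigcup_iT^i_Q(\emptyset,M)$; a model $M$ of $Q$ is an answer set of $Q$ iff $M=T^\infty_Q(\emptyset,M)$. Instance: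 for a rule $r$ and set $M$, $inst(r,M)=\{b\leftarrow body(r)\mid b\in M\cap head(r)_d\}$ if $M\cap head(r)_d\in head(r)_c$, and $\emptyset$ otherwise; $inst(P,M)=\bigcup_{r\in P}inst(r,M)$. Marek–Remmel semantics: the closure of $A$ is $\widehat A=(A_d,\{Y\subseteq A_d\mid \exists Z\in A_c,\ Z\subseteq Y\})$. $NSS(P,M)$ is obtained by (i) removing every rule whose body is not satisfied by $M$, and (ii) replacing each remaining rule $A\leftarrow e_1,\dots,e_n,A_1,\dots,A_m$ (with $e_i$ elementary and $A_j$ non-elementary) by the rules $a\leftarrow e_1,\dots,e_n,\widehat{A_1},\dots,\widehat{A_m}$ for each $a\in A_d\cap M$. For such a program $Q'$ (elementary heads, elementary or closed body c-atoms) the operator $T_{Q'}(X)=\{a\mid\exists r\in Q',\ head(r)=a,\ X\models body(r)\}$ is monotone and has a least fixpoint $M^{Q'}$. A model $S$ of $P$ is a Marek–Remmel answer set iff $S=M^{NSS(P,S)}$. *)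

theory Defs
  imports Main "HOL-Library.Countable"
begin

text \<open>A c-atom is a pair (A_d, A_c) with A_c a set of subsets of A_d.
  Atoms are the elements of a countable type 'a (the set of all atoms is UNIV).\<close>

type_synonym 'a catom = "'a set \<times> 'a set set"

definition dom_c :: "'a catom \<Rightarrow> 'a set" where "dom_c A = fst A"
definition sol_c :: "'a catom \<Rightarrow> 'a set set" where "sol_c A = snd A"

definition wf_catom :: "'a catom \<Rightarrow> bool" where
  "wf_catom A \<longleftrightarrow> sol_c A \<subseteq> Pow (dom_c A)"

definition elem :: "'a \<Rightarrow> 'a catom" where
  "elem p = ({p}, {{p}})"

definition is_elementary :: "'a catom \<Rightarrow> bool" where
  "is_elementary A \<longleftrightarrow> (\<exists>p. A = elem p)"

definition bot_c :: "'a catom" where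
  "bot_c = (UNIV, {})"

type_synonym 'a rule = "'a catom \<times> 'a catom list"

definition head :: "'a rule \<Rightarrow> 'a catom" where "head r = fst r"
definition body :: "'a rule \<Rightarrow> 'a catom list" where "body r = snd r"

definition wf_program :: "'a rule set \<Rightarrow> bool" where
  "wf_program P \<longleftrightarrow> (\<forall>r\<in>P. wf_catom (head r) \<and> (\<forall>B\<in>set (body r). wf_catom B))"

definition sat :: "'a set \<Rightarrow> 'a catom \<Rightarrow> bool" where
  "sat S A \<longleftrightarrow> S \<inter> dom_c A \<in> sol_c A"

definition sat_body :: "'a set \<Rightarrow> 'a rule \<Rightarrow> bool" where
  "sat_body S r \<longleftrightarrow> (\<forall>B\<in>set (body r). sat S B)"

definition is_model :: "'a set \<Rightarrow> 'a rule set \<Rightarrow> bool" where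
  "is_model M P \<longleftrightarrow> (\<forall>r\<in>P. sat_body M r \<longrightarrow> sat M (head r))"

definition cond_sat :: "'a set \<Rightarrow> 'a set \<Rightarrow> 'a catom \<Rightarrow> bool" where
  "cond_sat S M A \<longleftrightarrow> sat S A \<and>
     (\<forall>I. S \<inter> dom_c A \<subseteq> I \<and> I \<subseteq> M \<inter> dom_c A \<longrightarrow> I \<in> sol_c A)"

definition basic_program :: "'a rule set \<Rightarrow> bool" where
  "basic_program Q \<longleftrightarrow> (\<forall>r\<in>Q. is_elementary (head r) \<or> head r = bot_c)"

definition T_op :: "'a rule set \<Rightarrow> 'a set \<Rightarrow> 'a set \<Rightarrow> 'a set" where
  "T_op Q S M = {a. \<exists>r\<in>Q. head r = elem a \<and> (\<forall>B\<in>set (body r). cond_sat S M B)}"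

definition T_iter :: "'a rule set \<Rightarrow> 'a set \<Rightarrow> nat \<Rightarrow> 'a set" where
  "T_iter Q M i = ((\<lambda>S. T_op Q S M) ^^ i) {}"

definition T_inf :: "'a rule set \<Rightarrow> 'a set \<Rightarrow> 'a set" where
  "T_inf Q M = (\<Union>i. T_iter Q M i)"

definition basic_answer_set :: "'a rule set \<Rightarrow> 'a set \<Rightarrow> bool" where
  "basic_answer_set Q M \<longleftrightarrow> basic_program Q \<and> is_model M Q \<and> M = T_inf Q M"

definition inst_rule :: "'a rule \<Rightarrow> 'a set \<Rightarrow> 'a rule set" where
  "inst_rule r M = (if M \<inter> dom_c (head r) \<in> sol_c (head r)
      then {(elem b, body r) | b. b \<in> M \<inter> dom_c (head r)} else {})"

definition inst :: "'a rule set \<Rightarrow> 'a set \<Rightarrow> 'a rule set" where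
  "inst P M = (\<Union>r\<in>P. inst_rule r M)"

definition answer_set :: "'a rule set \<Rightarrow> 'a set \<Rightarrow> bool" where
  "answer_set P M \<longleftrightarrow> is_model M P \<and> basic_answer_set (inst P M) M"

definition closure_c :: "'a catom \<Rightarrow> 'a catom" where
  "closure_c A = (dom_c A, {Y. Y \<subseteq> dom_c A \<and> (\<exists>Z\<in>sol_c A. Z \<subseteq> Y)})"

definition NSS :: "'a rule set \<Rightarrow> 'a set \<Rightarrow> 'a rule set" where
  "NSS P M = {(elem a, map (\<lambda>B. if is_elementary B then B else closure_c B) (body r)) | r a.
               r \<in> P \<and> sat_body M r \<and> a \<in> dom_c (head r) \<inter> M}"

definition T_MR :: "'a rule set \<Rightarrow> 'a set \<Rightarrow> 'a set" where
  "T_MR Q X = {a. \<exists>r\<in>Q. head r = elem a \<and> sat_body X r}"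

definition MR_answer_set :: "'a rule set \<Rightarrow> 'a set \<Rightarrow> bool" where
  "MR_answer_set P M \<longleftrightarrow> is_model M P \<and> M = lfp (T_MR (NSS P M))"

end

theory Submission
  imports Defs
begin

(* Write Q = NSS(P,M) and L = lfp T_Q.  Body atoms of Q are the atoms of P,
   with every non-elementary atom replaced by its upward closure; hence
   satisfaction of these atoms is upward monotone, T_Q is monotone and L
   is its least fixpoint.  Two inclusions give M = L:
   - L \<subseteq> M, because every head of Q is an atom of M, so M is a pre-fixpoint;
   - M \<subseteq> L, because M = T_inf(inst(P,M), M), and for S \<subseteq> M every atom derived
     by the conditional operator T_op(inst(P,M), S, M) is derived by T_Q from S
     (conditional satisfaction w.r.t. M implies satisfaction by S and by M).
     Induction along the iterates of T_op then places each iterate below L. *)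

definition relax :: "'a catom \<Rightarrow> 'a catom" where
  "relax B = (if is_elementary B then B else closure_c B)"

lemma NSS_relax:
  "NSS P M = {(elem a, map relax (body r)) | r a.
                 r \<in> P \<and> sat_body M r \<and> a \<in> dom_c (head r) \<inter> M}"
  by (simp add: NSS_def relax_def[abs_def])

lemma sat_elem: "sat X (elem p) \<longleftrightarrow> p \<in> X"
  by (auto simp: sat_def elem_def dom_c_def sol_c_def)

lemma head_elem_eq [simp]: "head (elem b, bs) = elem a \<longleftrightarrow> a = b"
  by (auto simp: head_def elem_def)

lemma sat_relax: "sat X B \<Longrightarrow> sat X (relax B)"
  by (auto simp: relax_def sat_def closure_c_def dom_c_def sol_c_def)

(* Relaxed atoms are upward monotone: elementary atoms trivially,
   closures because their solution sets are closed under supersets. *)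
lemma sat_relax_mono:
  assumes "sat X (relax B)" and "X \<subseteq> Y"
  shows "sat Y (relax B)"
proof (cases "is_elementary B")
  case True
  then have "relax B = B" by (simp add: relax_def)
  moreover obtain p where "B = elem p"
    using True by (auto simp: is_elementary_def)
  ultimately show ?thesis
    using assms by (simp add: sat_elem subsetD)
next
  case False
  with assms show ?thesis
    by (auto simp: relax_def sat_def closure_c_def dom_c_def sol_c_def)
qed

lemma mono_T_MR_NSS: "mono (T_MR (NSS P M))"
proof (rule monoI, rule subsetI)
  fix X Y a assume XY: "X \<subseteq> Y" and "a \<in> T_MR (NSS P M) X"
  then obtain r where r: "r \<in> NSS P M" "head r = elem a" "sat_body X r"
    by (auto simp: T_MR_def)
  then obtain bs where "r = (elem a, map relax bs)"
    by (auto simp: NSS_relax)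
  with r(3) XY have "sat_body Y r"
    by (auto simp: sat_body_def body_def intro: sat_relax_mono)
  with r(1,2) show "a \<in> T_MR (NSS P M) Y"
    by (auto simp: T_MR_def)
qed

(* All heads of NSS(P,M) lie in M, so M is a pre-fixpoint of its operator. *)
lemma T_MR_NSS_subset: "T_MR (NSS P M) X \<subseteq> M"
  by (auto simp: T_MR_def NSS_relax)

lemma lfp_NSS_subset: "lfp (T_MR (NSS P M)) \<subseteq> M"
  by (rule lfp_lowerbound) (rule T_MR_NSS_subset)

(* Conditional satisfaction relative to M, with S \<subseteq> M, yields satisfaction by M:
   take I = M \<inter> A_d in the definition. *)
lemma cond_sat_sat_upper:
  assumes "cond_sat S M B" and "S \<subseteq> M"
  shows "sat M B"
proof -
  have "S \<inter> dom_c B \<subseteq> M \<inter> dom_c B"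
    using assms(2) by blast
  then have "M \<inter> dom_c B \<in> sol_c B"
    using assms(1) unfolding cond_sat_def by blast
  then show ?thesis
    by (simp add: sat_def)
qed

lemma T_op_inst_subset_T_MR:
  assumes SM: "S \<subseteq> M"
  shows "T_op (inst P M) S M \<subseteq> T_MR (NSS P M) S"
proof
  fix a assume "a \<in> T_op (inst P M) S M"
  then obtain r' where r': "r' \<in> inst P M" "head r' = elem a"
      and cs: "\<forall>B\<in>set (body r'). cond_sat S M B"
    by (auto simp: T_op_def)
  then obtain r where r: "r \<in> P" "a \<in> M \<inter> dom_c (head r)" "r' = (elem a, body r)"
    by (auto simp: inst_def inst_rule_def split: if_splits)
  have cs_r: "\<forall>B\<in>set (body r). cond_sat S M B"
    using cs r(3) by (simp add: body_def)
  then have "sat_body M r"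
    using SM by (auto simp: sat_body_def intro: cond_sat_sat_upper)
  with r(1,2) have inQ: "(elem a, map relax (body r)) \<in> NSS P M"
    unfolding NSS_relax by blast
  from cs_r have "sat_body S (elem a, map relax (body r))"
    by (auto simp: sat_body_def body_def cond_sat_def intro: sat_relax)
  with inQ show "a \<in> T_MR (NSS P M) S"
    unfolding T_MR_def by (auto intro!: bexI[of _ "(elem a, map relax (body r))"])
qed

lemma T_inf_inst_subset_lfp:
  assumes M: "M = T_inf (inst P M) M"
  shows "M \<subseteq> lfp (T_MR (NSS P M))"
proof -
  let ?L = "lfp (T_MR (NSS P M))"
  have "T_iter (inst P M) M i \<subseteq> ?L" for i
  proof (induction i)
    case 0
    show ?case by (simp add: T_iter_def)
  next
    case (Suc i)
    let ?S = "T_iter (inst P M) M i"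
    have "?S \<subseteq> M"
      using M by (auto simp: T_inf_def)
    then have "T_iter (inst P M) M (Suc i) \<subseteq> T_MR (NSS P M) ?S"
      using T_op_inst_subset_T_MR by (simp add: T_iter_def)
    also have "\<dots> \<subseteq> T_MR (NSS P M) ?L"
      using Suc.IH mono_T_MR_NSS by (rule monoD[rotated])
    also have "\<dots> = ?L"
      using lfp_fixpoint[OF mono_T_MR_NSS] .
    finally show ?case .
  qed
  then show ?thesis
    by (subst M) (auto simp: T_inf_def)
qed

theorem proposition7:
  fixes P :: "('a::countable) rule set" and M :: "'a set"
  assumes "wf_program P"
    and "answer_set P M"
  shows "MR_answer_set P M"
proof -
  have model: "is_model M P" and M: "M = T_inf (inst P M) M"
    using assms(2) by (auto simp: answer_set_def basic_answer_set_def)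
  have "M = lfp (T_MR (NSS P M))"
    using T_inf_inst_subset_lfp[OF M] lfp_NSS_subset by (rule subset_antisym)
  with model show ?thesis
    by (simp add: MR_answer_set_def)
qed

end
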